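(* Let $d\ge1$, let $|\cdot|$ be any norm on $\mathbb{R}^d$, let $p\in(0,+\infty)$ and let $X$ be an $\mathbb{R}^d$-valued random vector with distribution $\mu$ such that $\int_{\mathbb{R}^d}|\xi|^p\mu(d\xi)<+\infty$. Let $(a_N)_{N\ge1}$ be an $L^p$-optimal greedy quantization sequence for $X$. Assume that there exists $b\in(0,\tfrac12)$ such that the $b$-maximal function $\Psi_b$ associated with $(a_N)_{N\ge1}$ satisfies $\int_{\mathbb{R}^d}\Psi_b^{\frac{p}{p+d}}\,d\mu<+\infty$. Then $$\limsup_{N\to+\infty}N^{\frac1d}\,e_p(a^{(N)},X)<+\infty.$$
   Context: For $\Gamma\subset\mathbb{R}^d$ and $r>0$ put $e_r(\Gamma,X)=\big(\mathbb{E}\,d(X,\Gamma)^r\big)^{1/r}$ with $d(\xi,\Gamma)=\inf_{a\in\Gamma}|\xi-a|$ ($d(\xi,\emptyset)=+\infty$). A sequence $(a_N)_{N\ge1}$ in $\mathbb{R}^d$ is an $L^p$-optimal greedy quantization sequence if, writing $a^{(N)}=\{a_1,\dots,a_N\}$ and $a^{(0)}=\emptyset$, one has $a_{N+1}\in\operatorname{argmin}_{\xi\in\mathbb{R}^d}e_p(a^{(N)}\cup\{\xi\},X)$ for every $N\ge0$. For $b\in(0,\frac12)$, the $b$-maximal function associated with $(a_N)$ is $$\Psi_b(\xi)=\sup_{N\ge1}\frac{\lambda_d\big(B(\xi,b\,d(\xi,a^{(N)}))\big)}{\mu\big(B(\xi,b\,d(\xi,a^{(N)}))\big)}\in[0,+\infty],\quad\xi\in\mathbb{R}^d,$$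 where $\lambda_d$ is Lebesgue measure, $B(x,\rho)$ is the closed ball of center $x$ and radius $\rho$ for $|\cdot|$, and $\frac{0}{0}$, $\frac{c}{0}$ are interpreted with the conventions $\frac10=+\infty$. *)

theory Defs
  imports "HOL-Probability.Probability"
begin

definition is_norm :: "('a::real_vector \<Rightarrow> real) \<Rightarrow> bool" where
  "is_norm nrm \<longleftrightarrow> (\<forall>x. nrm x = 0 \<longleftrightarrow> x = 0) \<and> (\<forall>x y. nrm (x + y) \<le> nrm x + nrm y)
     \<and> (\<forall>c x. nrm (c *\<^sub>R x) = \<bar>c\<bar> * nrm x)"

definition epow :: "ennreal \<Rightarrow> real \<Rightarrow> ennreal" where
  "epow x r = (if x = \<infinity> then \<infinity> else ennreal (enn2real x powr r))"

text \<open>d(xi, Gamma) = inf over a in Gamma of |xi - a|; d(xi, {}) = +infinity.\<close>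
definition dist_set :: "('a::real_vector \<Rightarrow> real) \<Rightarrow> 'a \<Rightarrow> 'a set \<Rightarrow> ennreal" where
  "dist_set nrm \<xi> \<Gamma> = (INF a\<in>\<Gamma>. ennreal (nrm (\<xi> - a)))"

definition quant_err :: "('a::real_vector \<Rightarrow> real) \<Rightarrow> real \<Rightarrow> 'b measure \<Rightarrow> ('b \<Rightarrow> 'a) \<Rightarrow> 'a set \<Rightarrow> ennreal" where
  "quant_err nrm r M X \<Gamma> = epow (\<integral>\<^sup>+ \<omega>. epow (dist_set nrm (X \<omega>) \<Gamma>) r \<partial>M) (1 / r)"

definition first_pts :: "(nat \<Rightarrow> 'a) \<Rightarrow> nat \<Rightarrow> 'a set" where
  "first_pts a N = a ` {1..N}"

definition greedy_opt_seq :: "('a::real_vector \<Rightarrow> real) \<Rightarrow> real \<Rightarrow> 'b measure \<Rightarrow> ('b \<Rightarrow> 'a) \<Rightarrow> (nat \<Rightarrow> 'a) \<Rightarrow> bool" where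
  "greedy_opt_seq nrm p M X a \<longleftrightarrow>
     (\<forall>N. \<forall>\<xi>. quant_err nrm p M X (first_pts a N \<union> {a (Suc N)})
                \<le> quant_err nrm p M X (first_pts a N \<union> {\<xi>}))"

definition nball :: "('a::real_vector \<Rightarrow> real) \<Rightarrow> 'a \<Rightarrow> real \<Rightarrow> 'a set" where
  "nball nrm x \<rho> = {y. nrm (y - x) \<le> \<rho>}"

text \<open>b-maximal function; division in [0,+infinity] (c/0 = +infinity for c > 0, 0/0 = 0).\<close>
definition max_fun :: "('a::euclidean_space \<Rightarrow> real) \<Rightarrow> 'a measure \<Rightarrow> (nat \<Rightarrow> 'a) \<Rightarrow> real \<Rightarrow> 'a \<Rightarrow> ennreal" where
  "max_fun nrm \<mu> a b \<xi> =
     (SUP N\<in>{1..}. emeasure lborel (nball nrm \<xi> (b * enn2real (dist_set nrm \<xi> (first_pts a N))))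
                 / emeasure \<mu> (nball nrm \<xi> (b * enn2real (dist_set nrm \<xi> (first_pts a N)))))"

end

theory Submission
  imports Defs
begin

text \<open>
  Let u N be the p-th power distortion of a^(N) and \<delta> N \<xi> the distance from \<xi> to a^(N).
  Greedy optimality compares a^(N+1) with the competitor a^(N) \<union> {\<xi>}; on the ball
  B = B(\<xi>, b \<delta> N \<xi>) the distance to the quantizer drops from at least (1 - b) \<delta> N \<xi> to at most
  b \<delta> N \<xi>, which gives the micro-macro inequality
  u (N+1) + ((1 - b)^p - b^p) (\<delta> N \<xi>)^p \<mu>(B) \<le> u N.
  Since \<lambda>(B) is at least a constant times (\<delta> N \<xi>)^d and at most \<Psi>_b(\<xi>) \<mu>(B), it follows that
  (\<delta> N \<xi>)^(p+d) \<le> K \<Psi>_b(\<xi>) (u N - u (N+1)). Raising this to the power p/(p+d) and integrating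
  against \<mu> yields (u N)^(1+d/p) \<le> A (u N - u (N+1)). Along such a recursion (u N)^(-d/p) grows
  at least linearly, so N (u N)^(d/p) = (N^(1/d) e_p(a^(N), X))^d stays bounded.
\<close>

section \<open>Norms on Euclidean spaces\<close>

lemma is_norm_zero: "is_norm nrm \<Longrightarrow> nrm 0 = 0"
  by (simp add: is_norm_def)

lemma is_norm_triangle: "is_norm nrm \<Longrightarrow> nrm (x + y) \<le> nrm x + nrm y"
  by (simp add: is_norm_def)

lemma is_norm_scaleR: "is_norm nrm \<Longrightarrow> nrm (c *\<^sub>R x) = \<bar>c\<bar> * nrm x"
  by (simp add: is_norm_def)

lemma is_norm_minus_commute: "is_norm nrm \<Longrightarrow> nrm (x - y) = nrm (y - x)"
  using is_norm_scaleR[of nrm "-1" "y - x"] by simp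

lemma is_norm_triangle_diff: "is_norm nrm \<Longrightarrow> nrm (x - z) \<le> nrm (x - y) + nrm (y - z)"
  using is_norm_triangle[of nrm "x - y" "y - z"] by simp

lemma is_norm_nonneg: "is_norm nrm \<Longrightarrow> 0 \<le> nrm x"
  using is_norm_triangle_diff[of nrm x x 0] is_norm_minus_commute[of nrm x 0]
  by (simp add: is_norm_zero)

lemma is_norm_convex: "is_norm nrm \<Longrightarrow> convex_on UNIV nrm"
  by (rule convex_onI[OF _ convex_UNIV]) (use is_norm_triangle is_norm_scaleR in \<open>smt (verit)\<close>)

lemma is_norm_continuous:
  fixes nrm :: "'a::euclidean_space \<Rightarrow> real"
  shows "is_norm nrm \<Longrightarrow> continuous_on UNIV nrm"
  by (rule convex_on_continuous) (simp_all add: is_norm_convex)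

lemma is_norm_measurable:
  fixes nrm :: "'a::euclidean_space \<Rightarrow> real"
  shows "is_norm nrm \<Longrightarrow> nrm \<in> borel_measurable borel"
  by (rule borel_measurable_continuous_onI) (rule is_norm_continuous)

lemma closed_nball:
  fixes nrm :: "'a::euclidean_space \<Rightarrow> real"
  assumes "is_norm nrm"
  shows "closed (nball nrm x r)"
proof -
  have "continuous_on UNIV (\<lambda>y. nrm (y - x))"
    by (rule continuous_on_compose2[OF is_norm_continuous[OF assms]]) (auto intro!: continuous_intros)
  then show ?thesis
    unfolding nball_def by (rule closed_Collect_le[OF _ continuous_on_const])
qed

lemma nball_in_borel:
  fixes nrm :: "'a::euclidean_space \<Rightarrow> real"
  shows "is_norm nrm \<Longrightarrow> nball nrm x r \<in> sets borel"
  by (rule borel_closed) (rule closed_nball)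

definition basis_norm_sum :: "('a::euclidean_space \<Rightarrow> real) \<Rightarrow> real" where
  "basis_norm_sum nrm = (\<Sum>b\<in>Basis. nrm b)"

lemma basis_norm_sum_pos:
  fixes nrm :: "'a::euclidean_space \<Rightarrow> real"
  assumes "is_norm nrm"
  shows "0 < basis_norm_sum nrm"
proof -
  obtain b :: 'a where b: "b \<in> Basis"
    using nonempty_Basis by blast
  then have "0 < nrm b"
    using assms is_norm_nonneg[OF assms, of b] by (auto simp: is_norm_def nonzero_Basis order_le_less)
  also have "nrm b \<le> basis_norm_sum nrm"
    unfolding basis_norm_sum_def using b by (intro member_le_sum) (auto simp: is_norm_nonneg[OF assms])
  finally show ?thesis .
qed

lemma is_norm_le_cube_radius:
  fixes x :: "'a::euclidean_space"
  assumes nrm: "is_norm nrm" and cube: "\<And>b. b \<in> Basis \<Longrightarrow> \<bar>x \<bullet> b\<bar> \<le> t"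
  shows "nrm x \<le> t * basis_norm_sum nrm"
proof -
  have "nrm x = nrm (\<Sum>b\<in>Basis. (x \<bullet> b) *\<^sub>R b)"
    by (simp add: euclidean_representation)
  also have "\<dots> \<le> (\<Sum>b\<in>Basis. nrm ((x \<bullet> b) *\<^sub>R b))"
    by (induction rule: infinite_finite_induct)
       (auto simp: is_norm_zero[OF nrm] intro: order_trans[OF is_norm_triangle[OF nrm]])
  also have "\<dots> = (\<Sum>b\<in>Basis. \<bar>x \<bullet> b\<bar> * nrm b)"
    by (simp add: is_norm_scaleR[OF nrm])
  also have "\<dots> \<le> (\<Sum>b\<in>Basis. t * nrm b)"
    by (intro sum_mono mult_right_mono) (auto simp: cube is_norm_nonneg[OF nrm])
  finally show ?thesis
    by (simp add: basis_norm_sum_def sum_distrib_left)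
qed

lemma emeasure_lborel_nball_ge:
  fixes nrm :: "'a::euclidean_space \<Rightarrow> real"
  assumes nrm: "is_norm nrm" and r: "0 \<le> r"
  shows "ennreal ((2 * r / basis_norm_sum nrm) ^ DIM('a)) \<le> emeasure lborel (nball nrm \<xi> r)"
proof -
  define t where "t = r / basis_norm_sum nrm"
  have t: "0 \<le> t"
    unfolding t_def using basis_norm_sum_pos[OF nrm] r by simp
  have One: "One \<bullet> b = (1::real)" if "b \<in> (Basis :: 'a set)" for b
    using that by (simp add: inner_sum_left inner_Basis)
  have "cbox (\<xi> - t *\<^sub>R One) (\<xi> + t *\<^sub>R One) \<subseteq> nball nrm \<xi> r"
  proof
    fix y assume y: "y \<in> cbox (\<xi> - t *\<^sub>R One) (\<xi> + t *\<^sub>R One)"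
    have "\<bar>(y - \<xi>) \<bullet> b\<bar> \<le> t" if "b \<in> Basis" for b
      using y that One[OF that] by (auto simp: mem_box inner_diff_left inner_add_left abs_le_iff)
    then have "nrm (y - \<xi>) \<le> t * basis_norm_sum nrm"
      by (rule is_norm_le_cube_radius[OF nrm])
    then show "y \<in> nball nrm \<xi> r"
      using basis_norm_sum_pos[OF nrm] unfolding t_def nball_def by simp
  qed
  then have "emeasure lborel (cbox (\<xi> - t *\<^sub>R One) (\<xi> + t *\<^sub>R One)) \<le> emeasure lborel (nball nrm \<xi> r)"
    using nball_in_borel[OF nrm] by (intro emeasure_mono) auto
  moreover have "emeasure lborel (cbox (\<xi> - t *\<^sub>R One) (\<xi> + t *\<^sub>R One)) = ennreal ((2 * t) ^ DIM('a))"
    using t One by (simp add: emeasure_lborel_cbox_eq inner_diff_left inner_add_left)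
  ultimately show ?thesis
    by (simp add: t_def)
qed

section \<open>Distance to a finite set and distortion\<close>

definition min_dist :: "('a::real_vector \<Rightarrow> real) \<Rightarrow> 'a set \<Rightarrow> 'a \<Rightarrow> real" where
  "min_dist nrm \<Gamma> \<xi> = Min ((\<lambda>x. nrm (\<xi> - x)) ` \<Gamma>)"

lemma dist_set_eq_min_dist:
  assumes "finite \<Gamma>" "\<Gamma> \<noteq> {}"
  shows "dist_set nrm \<xi> \<Gamma> = ennreal (min_dist nrm \<Gamma> \<xi>)"
proof -
  have "dist_set nrm \<xi> \<Gamma> = Min (ennreal ` (\<lambda>x. nrm (\<xi> - x)) ` \<Gamma>)"
    unfolding dist_set_def using assms by (simp add: Min_Inf image_image)
  also have "\<dots> = ennreal (min_dist nrm \<Gamma> \<xi>)"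
    unfolding min_dist_def using assms
    by (intro mono_Min_commute[symmetric]) (auto simp: mono_def ennreal_leI)
  finally show ?thesis .
qed

lemma min_dist_le: "finite \<Gamma> \<Longrightarrow> x \<in> \<Gamma> \<Longrightarrow> min_dist nrm \<Gamma> \<xi> \<le> nrm (\<xi> - x)"
  unfolding min_dist_def by (rule Min_le) auto

lemma min_dist_attained:
  assumes "finite \<Gamma>" "\<Gamma> \<noteq> {}"
  obtains x where "x \<in> \<Gamma>" "min_dist nrm \<Gamma> \<xi> = nrm (\<xi> - x)"
proof -
  have "min_dist nrm \<Gamma> \<xi> \<in> (\<lambda>x. nrm (\<xi> - x)) ` \<Gamma>"
    unfolding min_dist_def using assms by (intro Min_in) auto
  with that show thesis
    by blast
qed

lemma min_dist_nonneg: "is_norm nrm \<Longrightarrow> finite \<Gamma> \<Longrightarrow> \<Gamma> \<noteq> {} \<Longrightarrow> 0 \<le> min_dist nrm \<Gamma> \<xi>"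
  by (rule min_dist_attained[of \<Gamma> nrm \<xi>]) (auto simp: is_norm_nonneg)

lemma min_dist_insert_le: "finite \<Gamma> \<Longrightarrow> \<Gamma> \<noteq> {} \<Longrightarrow> min_dist nrm (insert x \<Gamma>) \<xi> \<le> min_dist nrm \<Gamma> \<xi>"
  unfolding min_dist_def by (simp add: Min_insert)

lemma min_dist_measurable:
  fixes nrm :: "'a::euclidean_space \<Rightarrow> real"
  assumes "is_norm nrm" "finite \<Gamma>"
  shows "min_dist nrm \<Gamma> \<in> borel_measurable borel"
  unfolding min_dist_def using is_norm_measurable[OF assms(1)] assms(2) by measurable

definition distortion :: "('a::euclidean_space \<Rightarrow> real) \<Rightarrow> real \<Rightarrow> 'a measure \<Rightarrow> 'a set \<Rightarrow> ennreal" where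
  "distortion nrm p \<mu> \<Gamma> = (\<integral>\<^sup>+ \<xi>. ennreal (min_dist nrm \<Gamma> \<xi> powr p) \<partial>\<mu>)"

lemma quant_err_eq_distortion:
  fixes nrm :: "'a::euclidean_space \<Rightarrow> real"
  assumes nrm: "is_norm nrm" and X: "X \<in> borel_measurable M" and \<Gamma>: "finite \<Gamma>" "\<Gamma> \<noteq> {}"
  shows "quant_err nrm p M X \<Gamma> = epow (distortion nrm p (distr M borel X) \<Gamma>) (1 / p)"
proof -
  have "distortion nrm p (distr M borel X) \<Gamma> = (\<integral>\<^sup>+ \<omega>. ennreal (min_dist nrm \<Gamma> (X \<omega>) powr p) \<partial>M)"
    unfolding distortion_def using min_dist_measurable[OF nrm \<Gamma>(1)]
    by (intro nn_integral_distr[OF X]) measurable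
  also have "\<dots> = (\<integral>\<^sup>+ \<omega>. epow (dist_set nrm (X \<omega>) \<Gamma>) p \<partial>M)"
    using \<Gamma> by (simp add: dist_set_eq_min_dist epow_def min_dist_nonneg[OF nrm])
  finally show ?thesis
    unfolding quant_err_def by simp
qed

lemma epow_le_imp_le:
  assumes r: "0 < r" and le: "epow x r \<le> epow y r"
  shows "x \<le> y"
proof (cases y rule: ennreal_cases)
  case (real t)
  with le obtain s where x: "x = ennreal s" "0 \<le> s"
    by (cases x rule: ennreal_cases) (auto simp: epow_def top_unique)
  with real le have "s powr r \<le> t powr r"
    by (simp add: epow_def)
  with r x(2) have "s \<le> t"
    using powr_less_mono2[of r t s] real by linarith
  with x real show ?thesis
    by (simp add: ennreal_leI)
qed simp

lemma first_pts_Suc: "first_pts a (Suc N) = insert (a (Suc N)) (first_pts a N)"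
  by (auto simp: first_pts_def atLeastAtMostSuc_conv)

lemma first_pts_nonempty: "1 \<le> N \<Longrightarrow> first_pts a N \<noteq> {}"
  by (auto simp: first_pts_def)

lemma greedy_opt_seq_distortion_le:
  fixes nrm :: "'a::euclidean_space \<Rightarrow> real"
  assumes nrm: "is_norm nrm" and p: "0 < p" and X: "X \<in> borel_measurable M"
    and greedy: "greedy_opt_seq nrm p M X a"
  shows "distortion nrm p (distr M borel X) (first_pts a (Suc N))
    \<le> distortion nrm p (distr M borel X) (insert \<xi> (first_pts a N))"
proof (rule epow_le_imp_le)
  show "0 < 1 / p"
    using p by simp
  have "quant_err nrm p M X (first_pts a (Suc N)) \<le> quant_err nrm p M X (insert \<xi> (first_pts a N))"
    using greedy unfolding greedy_opt_seq_def first_pts_Suc by simp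
  then show "epow (distortion nrm p (distr M borel X) (first_pts a (Suc N))) (1 / p)
    \<le> epow (distortion nrm p (distr M borel X) (insert \<xi> (first_pts a N))) (1 / p)"
    using first_pts_nonempty[of "Suc N" a]
    by (simp add: quant_err_eq_distortion[OF nrm X] first_pts_def)
qed

lemma powr_add_le_two_powr:
  fixes x y p :: real
  assumes "0 \<le> x" "0 \<le> y" "0 < p"
  shows "(x + y) powr p \<le> 2 powr p * (x powr p + y powr p)"
proof -
  have "(x + y) powr p \<le> (2 * max x y) powr p"
    using assms by (intro powr_mono2) auto
  also have "\<dots> = 2 powr p * max x y powr p"
    using assms by (simp add: powr_mult)
  also have "max x y powr p \<le> x powr p + y powr p"
    by (simp add: max_def)
  finally show ?thesis
    by (simp add: mult_left_mono)
qed

lemma distortion_finite: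
  fixes nrm :: "'a::euclidean_space \<Rightarrow> real"
  assumes nrm: "is_norm nrm" and p: "0 < p" and \<mu>: "finite_measure \<mu>" "sets \<mu> = sets borel"
    and moment: "(\<integral>\<^sup>+ \<xi>. ennreal (nrm \<xi> powr p) \<partial>\<mu>) < \<infinity>"
    and \<Gamma>: "finite \<Gamma>" "x \<in> \<Gamma>"
  shows "distortion nrm p \<mu> \<Gamma> < \<infinity>"
proof -
  have "min_dist nrm \<Gamma> \<xi> powr p \<le> 2 powr p * (nrm \<xi> powr p + nrm x powr p)" for \<xi>
  proof -
    have "min_dist nrm \<Gamma> \<xi> \<le> nrm \<xi> + nrm x"
      using min_dist_le[OF \<Gamma>, of nrm \<xi>] is_norm_triangle_diff[OF nrm, of \<xi> x 0]
        is_norm_minus_commute[OF nrm, of 0 x]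
      by simp
    then have "min_dist nrm \<Gamma> \<xi> powr p \<le> (nrm \<xi> + nrm x) powr p"
      using min_dist_nonneg[OF nrm \<Gamma>(1)] \<Gamma>(2) p by (intro powr_mono2) auto
    also have "\<dots> \<le> 2 powr p * (nrm \<xi> powr p + nrm x powr p)"
      using p by (intro powr_add_le_two_powr) (auto simp: is_norm_nonneg[OF nrm])
    finally show ?thesis .
  qed
  then have "distortion nrm p \<mu> \<Gamma>
      \<le> (\<integral>\<^sup>+ \<xi>. ennreal (2 powr p) * (ennreal (nrm \<xi> powr p) + ennreal (nrm x powr p)) \<partial>\<mu>)"
    unfolding distortion_def
    by (intro nn_integral_mono) (simp add: ennreal_leI flip: ennreal_mult ennreal_plus)
  also have "\<dots> = ennreal (2 powr p)
      * ((\<integral>\<^sup>+ \<xi>. ennreal (nrm \<xi> powr p) \<partial>\<mu>) + ennreal (nrm x powr p) * emeasure \<mu> (space \<mu>))"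
    using is_norm_measurable[OF nrm]
    by (simp add: nn_integral_cmult nn_integral_add measurable_cong_sets[OF \<mu>(2) refl])
  also have "\<dots> < \<infinity>"
    using moment finite_measure.emeasure_finite[OF \<mu>(1)] by (simp add: ennreal_mult_less_top less_top)
  finally show ?thesis .
qed

lemma min_dist_insert_powr_le:
  fixes nrm :: "'a::euclidean_space \<Rightarrow> real" and \<Gamma> :: "'a set" and \<xi> :: 'a
  defines "\<delta> \<equiv> min_dist nrm \<Gamma> \<xi>"
  assumes nrm: "is_norm nrm" and p: "0 < p" and \<Gamma>: "finite \<Gamma>" "\<Gamma> \<noteq> {}"
    and b: "0 \<le> b" "b \<le> 1" and \<eta>: "\<eta> \<in> nball nrm \<xi> (b * \<delta>)"
  shows "min_dist nrm (insert \<xi> \<Gamma>) \<eta> powr p + ((1 - b) powr p - b powr p) * \<delta> powr p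
    \<le> min_dist nrm \<Gamma> \<eta> powr p"
proof -
  have \<delta>: "0 \<le> \<delta>"
    unfolding \<delta>_def by (rule min_dist_nonneg[OF nrm \<Gamma>])
  have \<eta>\<xi>: "nrm (\<eta> - \<xi>) \<le> b * \<delta>"
    using \<eta> by (simp add: nball_def)
  have "min_dist nrm (insert \<xi> \<Gamma>) \<eta> \<le> b * \<delta>"
    using min_dist_le[of "insert \<xi> \<Gamma>" \<xi> nrm \<eta>] \<Gamma> \<eta>\<xi> by auto
  then have near: "min_dist nrm (insert \<xi> \<Gamma>) \<eta> powr p \<le> b powr p * \<delta> powr p"
    using min_dist_nonneg[OF nrm, of "insert \<xi> \<Gamma>"] \<Gamma>(1) p b \<delta>
    by (simp add: powr_mono2 flip: powr_mult)
  obtain x where x: "x \<in> \<Gamma>" "min_dist nrm \<Gamma> \<eta> = nrm (\<eta> - x)"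
    using min_dist_attained[OF \<Gamma>] .
  have "\<delta> \<le> nrm (\<xi> - \<eta>) + nrm (\<eta> - x)"
    unfolding \<delta>_def using min_dist_le[OF \<Gamma>(1) x(1)] is_norm_triangle_diff[OF nrm] order_trans by blast
  then have "(1 - b) * \<delta> \<le> min_dist nrm \<Gamma> \<eta>"
    using \<eta>\<xi> x(2) is_norm_minus_commute[OF nrm, of \<xi> \<eta>] by (simp add: left_diff_distrib)
  then have far: "(1 - b) powr p * \<delta> powr p \<le> min_dist nrm \<Gamma> \<eta> powr p"
    using p b \<delta> by (simp add: powr_mono2 flip: powr_mult)
  from near far show ?thesis
    by (simp add: left_diff_distrib)
qed

lemma distortion_insert_plus_ball_le:
  fixes nrm :: "'a::euclidean_space \<Rightarrow> real" and \<Gamma> :: "'a set" and \<xi> :: 'a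
  defines "\<delta> \<equiv> min_dist nrm \<Gamma> \<xi>"
  assumes nrm: "is_norm nrm" and p: "0 < p" and \<mu>: "sets \<mu> = sets borel"
    and \<Gamma>: "finite \<Gamma>" "\<Gamma> \<noteq> {}" and b: "0 \<le> b" "b \<le> 1/2"
  shows "distortion nrm p \<mu> (insert \<xi> \<Gamma>)
      + ennreal (((1 - b) powr p - b powr p) * \<delta> powr p) * emeasure \<mu> (nball nrm \<xi> (b * \<delta>))
    \<le> distortion nrm p \<mu> \<Gamma>"
proof -
  define c where "c = (1 - b) powr p - b powr p"
  define B where "B = nball nrm \<xi> (b * \<delta>)"
  have c: "0 \<le> c"
    unfolding c_def using b p by (simp add: powr_mono2)
  have B: "B \<in> sets \<mu>"
    unfolding B_def \<mu> using nball_in_borel[OF nrm] .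
  have pointwise: "ennreal (min_dist nrm (insert \<xi> \<Gamma>) \<eta> powr p) + ennreal (c * \<delta> powr p) * indicator B \<eta>
      \<le> ennreal (min_dist nrm \<Gamma> \<eta> powr p)" for \<eta>
  proof (cases "\<eta> \<in> B")
    case True
    have "b \<le> 1"
      using b(2) by simp
    from min_dist_insert_powr_le[OF nrm p \<Gamma> b(1) this True[unfolded B_def \<delta>_def]]
    have "ennreal (min_dist nrm (insert \<xi> \<Gamma>) \<eta> powr p + c * \<delta> powr p) \<le> ennreal (min_dist nrm \<Gamma> \<eta> powr p)"
      unfolding c_def \<delta>_def by (rule ennreal_leI)
    with c True show ?thesis
      by (simp add: ennreal_plus)
  next
    case False
    then show ?thesis
      using min_dist_insert_le[OF \<Gamma>] min_dist_nonneg[OF nrm, of "insert \<xi> \<Gamma>"] \<Gamma>(1) p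
      by (simp add: ennreal_leI powr_mono2)
  qed
  have "distortion nrm p \<mu> (insert \<xi> \<Gamma>) + ennreal (c * \<delta> powr p) * emeasure \<mu> B
      = (\<integral>\<^sup>+ \<eta>. ennreal (min_dist nrm (insert \<xi> \<Gamma>) \<eta> powr p) + ennreal (c * \<delta> powr p) * indicator B \<eta> \<partial>\<mu>)"
  proof -
    have "(\<lambda>\<eta>. ennreal (min_dist nrm (insert \<xi> \<Gamma>) \<eta> powr p)) \<in> borel_measurable \<mu>"
      unfolding measurable_cong_sets[OF \<mu> refl]
      using min_dist_measurable[OF nrm finite.insertI[OF \<Gamma>(1)]] by measurable
    with B show ?thesis
      unfolding distortion_def by (simp add: nn_integral_add nn_integral_cmult_indicator)
  qed
  also have "\<dots> \<le> distortion nrm p \<mu> \<Gamma>"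
    unfolding distortion_def by (intro nn_integral_mono pointwise)
  finally show ?thesis
    unfolding B_def c_def .
qed

section \<open>A superlinear recursion\<close>

lemma one_plus_mult_le_one_minus_powr:
  fixes x s :: real
  assumes "0 \<le> x" "x < 1" "0 < s"
  shows "1 + s * x \<le> (1 - x) powr (- s)"
proof -
  have "x \<le> - ln (1 - x)"
    using ln_le_minus_one[of "1 - x"] assms by simp
  then have "s * x \<le> - s * ln (1 - x)"
    using mult_left_mono[of x "- ln (1 - x)" s] assms by simp
  also have "\<dots> \<le> exp (- s * ln (1 - x)) - 1"
    using exp_ge_add_one_self[of "- s * ln (1 - x)"] by linarith
  finally show ?thesis
    using assms by (simp add: powr_def)
qed

lemma powr_neg_increment:
  fixes u v k s :: real
  assumes s: "0 < s" and k: "0 < k" and u: "0 < u" and v: "0 < v"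
    and step: "v \<le> u - k * u powr (1 + s)"
  shows "u powr (- s) + s * k \<le> v powr (- s)"
proof -
  define x where "x = k * u powr s"
  have step': "v \<le> u * (1 - x)"
    using step u unfolding x_def by (simp add: powr_add algebra_simps)
  then have "0 < u * (1 - x)"
    using v by linarith
  then have x: "0 \<le> x" "x < 1"
    using u k by (auto simp: x_def zero_less_mult_iff)
  have "u powr (- s) + s * k = u powr (- s) * (1 + s * x)"
    using u by (simp add: x_def algebra_simps powr_add[symmetric])
  also have "\<dots> \<le> u powr (- s) * (1 - x) powr (- s)"
    by (intro mult_left_mono one_plus_mult_le_one_minus_powr x s) simp
  also have "\<dots> = (u * (1 - x)) powr (- s)"
    using u x by (simp add: powr_mult)
  also have "\<dots> \<le> v powr (- s)"
    using step' v s by (intro powr_mono2') auto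
  finally show ?thesis .
qed

lemma superlinear_decay_bound:
  fixes u :: "nat \<Rightarrow> real" and s A :: real
  assumes s: "0 < s" and A: "0 < A"
    and nonneg: "\<And>N. 1 \<le> N \<Longrightarrow> 0 \<le> u N"
    and decay: "\<And>N. 1 \<le> N \<Longrightarrow> u N powr (1 + s) \<le> A * (u N - u (Suc N))"
  shows "\<forall>N\<ge>2. real N * u N powr s \<le> 2 * A / s"
proof -
  have recursion: "u (Suc N) \<le> u N - (1 / A) * u N powr (1 + s)" if "1 \<le> N" for N
    using decay[OF that] A by (simp add: field_simps)
  have lower: "u N = 0 \<or> s / A * (real N - 1) \<le> u N powr (- s)" if "1 \<le> N" for N
    using that
  proof (induction N rule: dec_induct)
    case (step N)
    show ?case
    proof (cases "u (Suc N) = 0")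
      case False
      then have v: "0 < u (Suc N)"
        using nonneg[of "Suc N"] by simp
      moreover have "0 \<le> u N powr (1 + s)"
        by simp
      ultimately have u: "0 < u N"
        using step.hyps recursion[OF step.hyps(1)] A by (smt (verit) divide_nonneg_pos mult_nonneg_nonneg)
      with step.IH have "s / A * (real N - 1) \<le> u N powr (- s)"
        by simp
      with powr_neg_increment[OF s _ u v recursion[OF step.hyps(1)]] A show ?thesis
        by (simp add: algebra_simps)
    qed simp
  qed simp
  show ?thesis
  proof (intro allI impI)
    fix N :: nat assume N: "2 \<le> N"
    show "real N * u N powr s \<le> 2 * A / s"
    proof (cases "u N = 0")
      case False
      then have u: "0 < u N"
        using nonneg[of N] N by simp
      have pos: "0 < s / A * (real N - 1)"
        using s A N by simp
      then have "s / A * (real N - 1) \<le> u N powr (- s)"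
        using lower[of N] N False by auto
      then have "u N powr s \<le> A / (s * (real N - 1))"
        using u pos s A by (simp add: powr_minus field_simps)
      then have "real N * u N powr s \<le> real N * (A / (s * (real N - 1)))"
        by (rule mult_left_mono) simp
      also have "\<dots> = A / s * (real N / (real N - 1))"
        by simp
      also have "\<dots> \<le> A / s * 2"
        using N A s by (intro mult_left_mono) (auto simp: field_simps)
      finally show ?thesis
        by (simp add: mult.commute)
    qed (use A s in simp)
  qed
qed

section \<open>Greedy quantization sequences\<close>

lemma ennreal_le_mult_if_divide_le:
  fixes x y z :: ennreal
  assumes "x / y \<le> z" "z \<noteq> \<infinity>" "y \<noteq> \<infinity>"
  shows "x \<le> z * y"
proof (cases "y = 0")
  case True
  with assms show ?thesis
    by (auto simp: top_unique split: if_splits)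
next
  case False
  then have "x = x / y * y"
    using assms(3) by (simp add: ennreal_divide_times less_top)
  also have "\<dots> \<le> z * y"
    using assms(1) by (rule mult_right_mono) simp
  finally show ?thesis .
qed

locale greedy_quantization =
  fixes nrm :: "'a::euclidean_space \<Rightarrow> real" and p :: real and \<mu> :: "'a measure" and a :: "nat \<Rightarrow> 'a"
  assumes norm: "is_norm nrm" and p_pos: "0 < p"
    and finite_measure: "finite_measure \<mu>" and sets_eq: "sets \<mu> = sets borel"
    and moment: "(\<integral>\<^sup>+ \<xi>. ennreal (nrm \<xi> powr p) \<partial>\<mu>) < \<infinity>"
    and greedy: "\<And>N \<xi>. distortion nrm p \<mu> (first_pts a (Suc N))
                        \<le> distortion nrm p \<mu> (insert \<xi> (first_pts a N))"
begin

definition distortion_seq :: "nat \<Rightarrow> real" where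
  "distortion_seq N = enn2real (distortion nrm p \<mu> (first_pts a N))"

lemma distortion_seq_nonneg [simp]: "0 \<le> distortion_seq N"
  by (simp add: distortion_seq_def)

lemma distortion_first_pts_eq:
  assumes "1 \<le> N"
  shows "distortion nrm p \<mu> (first_pts a N) = ennreal (distortion_seq N)"
proof -
  have "a 1 \<in> first_pts a N"
    using assms by (simp add: first_pts_def)
  then have "distortion nrm p \<mu> (first_pts a N) < \<infinity>"
    using distortion_finite[OF norm p_pos finite_measure sets_eq moment] by (simp add: first_pts_def)
  then show ?thesis
    by (simp add: distortion_seq_def ennreal_enn2real_if less_top)
qed

lemma distortion_seq_Suc_plus_ball_le:
  fixes N :: nat and \<xi> :: 'a
  defines "\<delta> \<equiv> min_dist nrm (first_pts a N) \<xi>"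
  assumes N: "1 \<le> N" and b: "0 \<le> b" "b \<le> 1/2"
  shows "distortion_seq (Suc N) + ((1 - b) powr p - b powr p) * \<delta> powr p * measure \<mu> (nball nrm \<xi> (b * \<delta>))
    \<le> distortion_seq N"
proof -
  define c where "c = ((1 - b) powr p - b powr p) * \<delta> powr p"
  have c: "0 \<le> c"
    unfolding c_def using b p_pos by (simp add: powr_mono2)
  define \<Gamma> where "\<Gamma> = first_pts a N"
  have \<Gamma>: "finite \<Gamma>" "\<Gamma> \<noteq> {}"
    using first_pts_nonempty[OF N] by (auto simp: \<Gamma>_def first_pts_def)
  have "ennreal (distortion_seq (Suc N)) + ennreal c * emeasure \<mu> (nball nrm \<xi> (b * \<delta>))
      \<le> distortion nrm p \<mu> (insert \<xi> \<Gamma>) + ennreal c * emeasure \<mu> (nball nrm \<xi> (b * \<delta>))"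
    using greedy[of N \<xi>] distortion_first_pts_eq[of "Suc N"] unfolding \<Gamma>_def by (intro add_right_mono) simp
  also have "\<dots> \<le> distortion nrm p \<mu> \<Gamma>"
    using distortion_insert_plus_ball_le[OF norm p_pos sets_eq \<Gamma> b] unfolding c_def \<delta>_def \<Gamma>_def .
  also have "\<dots> = ennreal (distortion_seq N)"
    unfolding \<Gamma>_def by (rule distortion_first_pts_eq[OF N])
  finally have "ennreal (distortion_seq (Suc N) + c * measure \<mu> (nball nrm \<xi> (b * \<delta>)))
      \<le> ennreal (distortion_seq N)"
    using c by (simp add: finite_measure.emeasure_eq_measure[OF finite_measure] ennreal_mult)
  then show ?thesis
    by (simp add: c_def)
qed

lemma distortion_seq_Suc_le: "1 \<le> N \<Longrightarrow> distortion_seq (Suc N) \<le> distortion_seq N"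
  by (rule order_trans[OF _ distortion_seq_Suc_plus_ball_le[where b=0 and \<xi>=0]]) auto

end

locale greedy_quantization_maximal = greedy_quantization +
  fixes b :: real
  assumes b_pos: "0 < b" and b_less: "b < 1/2"
    and maximal_integrable:
      "(\<integral>\<^sup>+ \<xi>. epow (max_fun nrm \<mu> a b \<xi>) (p / (p + DIM('a))) \<partial>\<mu>) < \<infinity>"
begin

definition K :: real where
  "K = 1 / (((1 - b) powr p - b powr p) * (2 * b / basis_norm_sum nrm) ^ DIM('a))"

lemma K_pos: "0 < K"
  using b_pos b_less p_pos basis_norm_sum_pos[OF norm]
  by (simp add: K_def powr_less_mono2)

lemma ball_volume_le_maximal_mass:
  fixes N :: nat and \<xi> :: 'a
  defines "\<delta> \<equiv> min_dist nrm (first_pts a N) \<xi>"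
  assumes N: "1 \<le> N" and \<Psi>: "max_fun nrm \<mu> a b \<xi> \<noteq> \<infinity>"
  shows "(2 * b / basis_norm_sum nrm) ^ DIM('a) * \<delta> ^ DIM('a)
    \<le> enn2real (max_fun nrm \<mu> a b \<xi>) * measure \<mu> (nball nrm \<xi> (b * \<delta>))"
proof -
  define \<psi> where "\<psi> = enn2real (max_fun nrm \<mu> a b \<xi>)"
  define B where "B = nball nrm \<xi> (b * \<delta>)"
  have \<delta>: "0 \<le> \<delta>"
    using min_dist_nonneg[OF norm, of "first_pts a N" \<xi>] first_pts_nonempty[OF N]
    by (simp add: \<delta>_def first_pts_def)
  have "enn2real (dist_set nrm \<xi> (first_pts a N)) = \<delta>"
    using dist_set_eq_min_dist[of "first_pts a N"] first_pts_nonempty[OF N] \<delta>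
    by (simp add: \<delta>_def first_pts_def)
  then have "emeasure lborel B / emeasure \<mu> B \<le> max_fun nrm \<mu> a b \<xi>"
    unfolding max_fun_def B_def using N by (intro SUP_upper2[of N]) auto
  then have "emeasure lborel B \<le> ennreal \<psi> * ennreal (measure \<mu> B)"
    using \<Psi> by (intro ennreal_le_mult_if_divide_le)
       (auto simp: \<psi>_def finite_measure.emeasure_eq_measure[OF finite_measure] ennreal_enn2real_if)
  moreover have "ennreal ((2 * (b * \<delta>) / basis_norm_sum nrm) ^ DIM('a)) \<le> emeasure lborel B"
    unfolding B_def using b_pos \<delta> by (intro emeasure_lborel_nball_ge[OF norm]) simp
  ultimately have "ennreal ((2 * (b * \<delta>) / basis_norm_sum nrm) ^ DIM('a)) \<le> ennreal (\<psi> * measure \<mu> B)"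
    by (simp add: \<psi>_def ennreal_mult)
  then have "(2 * (b * \<delta>) / basis_norm_sum nrm) ^ DIM('a) \<le> \<psi> * measure \<mu> B"
    by (simp add: \<psi>_def)
  then show ?thesis
    by (simp add: \<psi>_def B_def power_mult_distrib[symmetric] mult.assoc)
qed

lemma min_dist_powr_le_decrement:
  fixes N :: nat and \<xi> :: 'a
  defines "\<delta> \<equiv> min_dist nrm (first_pts a N) \<xi>"
  assumes N: "1 \<le> N" and \<Psi>: "max_fun nrm \<mu> a b \<xi> \<noteq> \<infinity>"
  shows "\<delta> powr (p + DIM('a))
    \<le> K * enn2real (max_fun nrm \<mu> a b \<xi>) * (distortion_seq N - distortion_seq (Suc N))"
proof (cases "\<delta> = 0")
  case False
  define \<psi> where "\<psi> = enn2real (max_fun nrm \<mu> a b \<xi>)"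
  define m where "m = measure \<mu> (nball nrm \<xi> (b * \<delta>))"
  define c where "c = (1 - b) powr p - b powr p"
  have \<delta>: "0 < \<delta>"
    using False min_dist_nonneg[OF norm, of "first_pts a N" \<xi>] first_pts_nonempty[OF N]
    by (simp add: \<delta>_def first_pts_def)
  have c: "0 < c"
    using b_pos b_less p_pos by (simp add: c_def powr_less_mono2)
  have "\<delta> powr (p + DIM('a)) / K = c * \<delta> powr p * ((2 * b / basis_norm_sum nrm) ^ DIM('a) * \<delta> ^ DIM('a))"
    using \<delta> by (simp add: K_def powr_add powr_realpow c_def)
  also have "\<dots> \<le> c * \<delta> powr p * (\<psi> * m)"
    using ball_volume_le_maximal_mass[OF N \<Psi>] c
    unfolding \<psi>_def m_def \<delta>_def by (intro mult_left_mono) auto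
  also have "\<dots> = \<psi> * (c * \<delta> powr p * m)"
    by simp
  also have "\<dots> \<le> \<psi> * (distortion_seq N - distortion_seq (Suc N))"
    using distortion_seq_Suc_plus_ball_le[OF N, where b=b and \<xi>=\<xi>] b_pos b_less
    unfolding c_def m_def \<delta>_def by (intro mult_left_mono) (simp_all add: \<psi>_def)
  finally show ?thesis
    using K_pos by (simp add: \<psi>_def divide_le_eq mult.assoc mult.commute)
qed (use p_pos distortion_seq_Suc_le[OF N] K_pos in simp)

lemma min_dist_powr_div_le_maximal:
  defines "q \<equiv> p / (p + DIM('a))"
  assumes N: "1 \<le> N" and t: "0 < t" "distortion_seq N - distortion_seq (Suc N) \<le> t"
  shows "ennreal (min_dist nrm (first_pts a N) \<xi> powr p / (K * t) powr q) \<le> epow (max_fun nrm \<mu> a b \<xi>) q"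
proof (cases "max_fun nrm \<mu> a b \<xi> = \<infinity>")
  case False
  define \<psi> where "\<psi> = enn2real (max_fun nrm \<mu> a b \<xi>)"
  define \<delta> where "\<delta> = min_dist nrm (first_pts a N) \<xi>"
  have \<psi>: "0 \<le> \<psi>"
    by (simp add: \<psi>_def)
  have q: "0 < q" "(p + DIM('a)) * q = p"
    using p_pos by (simp_all add: q_def)
  have "\<delta> powr p = (\<delta> powr (p + DIM('a))) powr q"
    using q by (simp add: powr_powr)
  also have "\<dots> \<le> (K * \<psi> * (distortion_seq N - distortion_seq (Suc N))) powr q"
    using min_dist_powr_le_decrement[OF N False] q(1)
    by (intro powr_mono2) (simp_all add: \<delta>_def \<psi>_def)
  also have "\<dots> \<le> (K * \<psi> * t) powr q"
    using t(2) distortion_seq_Suc_le[OF N] K_pos \<psi> q(1) by (intro powr_mono2 mult_left_mono) simp_all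
  also have "\<dots> = (K * t) powr q * \<psi> powr q"
    using K_pos t \<psi> by (simp add: powr_mult mult_ac)
  finally have "\<delta> powr p / (K * t) powr q \<le> \<psi> powr q"
    using K_pos t by (simp add: divide_le_eq mult.commute)
  then show ?thesis
    using False by (simp add: epow_def \<psi>_def \<delta>_def ennreal_leI)
qed (simp add: epow_def)

text \<open>
  The bound is stated for every positive t above the decrement: where \<Psi>_b = \<infinity> the pointwise
  estimate needs a positive factor, and a vanishing decrement is recovered by letting t decrease
  to it.
\<close>

lemma distortion_seq_le_of_decrement_le:
  defines "q \<equiv> p / (p + DIM('a))"
  defines "J \<equiv> enn2real (\<integral>\<^sup>+ \<xi>. epow (max_fun nrm \<mu> a b \<xi>) q \<partial>\<mu>)"
  assumes N: "1 \<le> N" and t: "0 < t" "distortion_seq N - distortion_seq (Suc N) \<le> t"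
  shows "distortion_seq N \<le> (K * t) powr q * J"
proof -
  define k where "k = (K * t) powr q"
  have k: "0 < k"
    using K_pos t by (simp add: k_def)
  have "ennreal (distortion_seq N / k) = ennreal (1 / k) * distortion nrm p \<mu> (first_pts a N)"
    using k by (simp add: distortion_first_pts_eq[OF N] divide_inverse mult.commute flip: ennreal_mult)
  also have "\<dots> = (\<integral>\<^sup>+ \<xi>. ennreal (min_dist nrm (first_pts a N) \<xi> powr p / k) \<partial>\<mu>)"
    unfolding distortion_def using min_dist_measurable[OF norm, of "first_pts a N"] k
    by (subst nn_integral_cmult[symmetric])
       (simp_all add: measurable_cong_sets[OF sets_eq refl] first_pts_def divide_inverse mult.commute
         flip: ennreal_mult)
  also have "\<dots> \<le> (\<integral>\<^sup>+ \<xi>. epow (max_fun nrm \<mu> a b \<xi>) q \<partial>\<mu>)"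
    unfolding k_def q_def using min_dist_powr_div_le_maximal[OF N t] by (intro nn_integral_mono) simp
  also have "\<dots> = ennreal J"
    using maximal_integrable by (simp add: J_def q_def ennreal_enn2real_if less_top)
  finally have "distortion_seq N / k \<le> J"
    by (simp add: J_def)
  then show ?thesis
    using k by (simp add: k_def field_simps)
qed

lemma distortion_seq_powr_le_decrement:
  "\<exists>A>0. \<forall>N\<ge>1. distortion_seq N powr (1 + DIM('a) / p) \<le> A * (distortion_seq N - distortion_seq (Suc N))"
proof -
  define q where "q = p / (p + DIM('a))"
  define J where "J = enn2real (\<integral>\<^sup>+ \<xi>. epow (max_fun nrm \<mu> a b \<xi>) q \<partial>\<mu>)"
  define A where "A = K * J powr (1 / q) + 1"
  have q: "0 < q" "1 / q = 1 + DIM('a) / p"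
    using p_pos by (simp_all add: q_def field_simps)
  have A: "0 < A"
    using K_pos by (simp add: A_def add_nonneg_pos)
  have "distortion_seq N powr (1 / q) \<le> A * (distortion_seq N - distortion_seq (Suc N))"
    if N: "1 \<le> N" for N
  proof -
    have "distortion_seq N powr (1 / q) / A \<le> t"
      if t: "distortion_seq N - distortion_seq (Suc N) < t" for t
    proof -
      have "0 < t"
        using t distortion_seq_Suc_le[OF N] by simp
      then have "distortion_seq N powr (1 / q) \<le> ((K * t) powr q * J) powr (1 / q)"
        using distortion_seq_le_of_decrement_le[OF N, of t] t p_pos unfolding q_def J_def
        by (intro powr_mono2) (simp_all add: less_imp_le)
      also have "\<dots> = K * J powr (1 / q) * t"
        using K_pos \<open>0 < t\<close> q(1) by (simp add: J_def powr_mult powr_powr mult_ac)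
      also have "\<dots> \<le> A * t"
        using \<open>0 < t\<close> by (simp add: A_def mult_right_mono)
      finally show ?thesis
        using A by (simp add: divide_le_eq mult.commute)
    qed
    then have "distortion_seq N powr (1 / q) / A \<le> distortion_seq N - distortion_seq (Suc N)"
      by (rule dense_ge)
    then show ?thesis
      using A by (simp add: divide_le_eq mult.commute)
  qed
  with A q(2) show ?thesis
    by auto
qed

lemma distortion_seq_rate: "\<exists>C. \<forall>N\<ge>2. real N powr (1 / DIM('a)) * distortion_seq N powr (1 / p) \<le> C"
proof -
  obtain A where A: "0 < A" and decay: "\<And>N. 1 \<le> N \<Longrightarrow>
      distortion_seq N powr (1 + DIM('a) / p) \<le> A * (distortion_seq N - distortion_seq (Suc N))"
    using distortion_seq_powr_le_decrement by blast
  define C where "C = 2 * A / (DIM('a) / p)"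
  have "real N powr (1 / DIM('a)) * distortion_seq N powr (1 / p) \<le> C powr (1 / DIM('a))"
    if N: "2 \<le> N" for N
  proof -
    have "real N * distortion_seq N powr (DIM('a) / p) \<le> C"
      using superlinear_decay_bound[of "DIM('a) / p" A distortion_seq] p_pos A decay N
      by (simp add: C_def)
    then have "(real N * distortion_seq N powr (DIM('a) / p)) powr (1 / DIM('a)) \<le> C powr (1 / DIM('a))"
      by (intro powr_mono2) simp_all
    then show ?thesis
      using p_pos by (simp add: powr_mult powr_powr)
  qed
  then show ?thesis
    by blast
qed

end

theorem theorem3p1:
  fixes nrm :: "'a::euclidean_space \<Rightarrow> real"
    and p :: real
    and M :: "'b measure"
    and X :: "'b \<Rightarrow> 'a"
    and a :: "nat \<Rightarrow> 'a"
  assumes "is_norm nrm"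
    and "p > 0"
    and "prob_space M"
    and "X \<in> borel_measurable M"
    and "(\<integral>\<^sup>+ \<xi>. ennreal (nrm \<xi> powr p) \<partial>(distr M borel X)) < \<infinity>"
    and "greedy_opt_seq nrm p M X a"
    and "\<exists>b. 0 < b \<and> b < 1/2 \<and>
           (\<integral>\<^sup>+ \<xi>. epow (max_fun nrm (distr M borel X) a b \<xi>) (p / (p + real DIM('a))) \<partial>(distr M borel X)) < \<infinity>"
  shows "limsup (\<lambda>N. ennreal (real N powr (1 / real DIM('a))) * quant_err nrm p M X (first_pts a N)) < \<infinity>"
proof -
  from assms(7) obtain b where b: "0 < b" "b < 1/2"
    and maximal: "(\<integral>\<^sup>+ \<xi>. epow (max_fun nrm (distr M borel X) a b \<xi>) (p / (p + DIM('a)))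
                    \<partial>distr M borel X) < \<infinity>"
    by blast
  interpret greedy_quantization_maximal nrm p "distr M borel X" a b
    using assms(1,2,5) b maximal greedy_opt_seq_distortion_le[OF assms(1,2,4,6)]
      prob_space.finite_measure[OF prob_space.prob_space_distr[OF assms(3,4)]]
    by (intro greedy_quantization_maximal.intro greedy_quantization.intro
        greedy_quantization_maximal_axioms.intro) simp_all
  obtain C where C: "\<And>N. 2 \<le> N \<Longrightarrow> real N powr (1 / DIM('a)) * distortion_seq N powr (1 / p) \<le> C"
    using distortion_seq_rate by blast
  have "ennreal (real N powr (1 / DIM('a))) * quant_err nrm p M X (first_pts a N) \<le> ennreal C"
    if N: "2 \<le> N" for N
  proof -
    have "quant_err nrm p M X (first_pts a N) = ennreal (distortion_seq N powr (1 / p))"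
      using N first_pts_nonempty[of N a] distortion_first_pts_eq[of N]
      by (simp add: quant_err_eq_distortion[OF assms(1,4)] first_pts_def epow_def)
    with C[OF N] show ?thesis
      by (simp add: ennreal_leI flip: ennreal_mult)
  qed
  then have "limsup (\<lambda>N. ennreal (real N powr (1 / DIM('a))) * quant_err nrm p M X (first_pts a N))
      \<le> ennreal C"
    by (intro Limsup_bounded) (auto simp: eventually_sequentially)
  then show ?thesis
    by (simp add: le_less_trans)
qed

end
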